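(* As $m\to\infty$ through the positive integers, $$\gamma_1\!\left(\tfrac{1}{m}\right)+m\ln m\to\gamma_1,\qquad \gamma_2\!\left(\tfrac{1}{m}\right)-m\ln^2 m\to\gamma_2.$$
   Context: The Stieltjes constants $\gamma_k(a)$ are defined by the Laurent expansion of the Hurwitz zeta function $\zeta(s,a)=\frac{1}{s-1}+\sum_{n=0}^\infty \frac{(-1)^n}{n!}\gamma_n(a)(s-1)^n$ about $s=1$; $\gamma_k:=\gamma_k(1)$. *)

theory Defs
  imports "HOL-Analysis.Analysis"
begin

text \<open>Hurwitz zeta function on the half-line of convergence s > 1 (real s, a > 0).\<close>
definition hurwitz_zeta_real :: "real \<Rightarrow> real \<Rightarrow> real" where
  "hurwitz_zeta_real s a = (\<Sum>k. (real k + a) powr (-s))"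

text \<open>Stieltjes constants via the Laurent expansion about s = 1:
  zeta(s,a) - 1/(s-1) is analytic at 1 with Taylor coefficients (-1)^n gamma_n(a)/n!,
  hence gamma_n(a) = (-1)^n g^(n)(1) where g(s) = zeta(s,a) - 1/(s-1); the value
  g^(n)(1) is obtained as the limit of g^(n)(s) as s tends to 1 from the right.\<close>
definition stieltjes :: "nat \<Rightarrow> real \<Rightarrow> real" where
  "stieltjes n a = (-1) ^ n *
     Lim (at_right 1) ((deriv ^^ n) (\<lambda>s. hurwitz_zeta_real s a - 1 / (s - 1)))"

end

theory Submission
  imports Defs "HOL-Complex_Analysis.Complex_Analysis"
begin

(*
  Since zeta(s,1/m) = m^s + zeta(s,1+1/m), the regular part zeta(s,1/m) - 1/(s-1) at s = 1
  splits as m^s + (zeta(s,1) - 1/(s-1)) + (zeta(s,1+1/m) - zeta(s,1)).  The n-th derivative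
  of m^s at 1 is m ln^n m.  The last summand is holomorphic on the fixed disc |s-1| < 1/2 and,
  by the mean value theorem applied termwise, bounded there by O(1/m); Cauchy's estimates make
  all its derivatives at 1 O(1/m).  The regular part of zeta(s,1) itself is continued across s = 1 using the
  duplication formula zeta(s,1/2) = (2^s - 1) zeta(s,1).
*)

lemma summable_hurwitz_zeta_real:
  assumes "1 < s" "0 < a"
  shows "summable (\<lambda>k. (real k + a) powr (-s))"
proof (rule summable_comparison_test'[where N=1])
  show "summable (\<lambda>k. real k powr (-s))"
    using summable_real_powr_iff[of "-s"] assms by simp
  show "norm ((real k + a) powr (-s)) \<le> real k powr (-s)" if "k \<ge> 1" for k
    using that assms by (auto intro!: powr_mono2')
qed

lemma hurwitz_zeta_real_shift:
  assumes "1 < s" "0 < a"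
  shows "hurwitz_zeta_real s a = a powr (-s) + hurwitz_zeta_real s (a + 1)"
  using suminf_split_head[OF summable_hurwitz_zeta_real[OF assms]]
  unfolding hurwitz_zeta_real_def by (simp add: add_ac)

lemma hurwitz_zeta_real_half:
  assumes "1 < s"
  shows "hurwitz_zeta_real s (1/2) = (2 powr s - 1) * hurwitz_zeta_real s 1"
proof -
  define f where "f k = (real k + 1) powr (-s)" for k
  define Z where "Z = hurwitz_zeta_real s 1"
  define H where "H = hurwitz_zeta_real s (1/2)"
  have "f sums Z"
    unfolding f_def Z_def hurwitz_zeta_real_def
    using assms by (intro summable_sums summable_hurwitz_zeta_real) auto
  then have pairs: "(\<lambda>n. f (2*n) + f (2*n+1)) sums Z"
    using sums_group[of f Z 2] by (simp add: mult.commute numeral_2_eq_2)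
  have "f (2*n) + f (2*n+1) = 2 powr (-s) * ((real n + 1/2) powr (-s) + (real n + 1) powr (-s))" for n
  proof -
    have "f (2*n) = 2 powr (-s) * (real n + 1/2) powr (-s)"
      unfolding f_def by (subst powr_mult[symmetric]) (auto simp: algebra_simps)
    moreover have "f (2*n+1) = 2 powr (-s) * (real n + 1) powr (-s)"
      unfolding f_def by (subst powr_mult[symmetric]) (auto simp: algebra_simps)
    ultimately show ?thesis by (simp add: algebra_simps)
  qed
  moreover have "(\<lambda>n. 2 powr (-s) * ((real n + 1/2) powr (-s) + (real n + 1) powr (-s)))
                   sums (2 powr (-s) * (H + Z))"
    unfolding H_def Z_def hurwitz_zeta_real_def
    using assms by (intro sums_mult sums_add summable_sums summable_hurwitz_zeta_real) auto
  ultimately have "Z = 2 powr (-s) * (H + Z)"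
    using pairs sums_unique2 by simp
  then have "2 powr s * Z = H + Z"
    by (simp add: powr_minus field_simps)
  then show ?thesis
    unfolding H_def Z_def by (simp add: algebra_simps)
qed

lemma norm_powr_diff_le:
  fixes x y :: real and z :: complex
  assumes "1 \<le> x" "1 \<le> y" and z: "z \<in> cball 1 (1/2)"
  shows "norm (of_real x powr (-z) - of_real y powr (-z)) \<le> 3/2 * \<bar>x - y\<bar> * min x y powr (-3/2)"
proof -
  let ?S = "closed_segment (complex_of_real x) (of_real y)"
  have real_point: "\<exists>t. w = of_real t \<and> min x y \<le> t" if "w \<in> ?S" for w
    using that by (auto simp: closed_segment_of_real closed_segment_eq_real_ivl split: if_splits)
  have norm_z: "norm z \<le> 3/2"
    using z norm_triangle_ineq[of 1 "z - 1"] by (auto simp: dist_norm norm_minus_commute)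
  have Re_z: "Re z \<ge> 1/2"
    using z abs_Re_le_cmod[of "z - 1"] by (auto simp: dist_norm norm_minus_commute)
  have "norm (of_real x powr (-z) - of_real y powr (-z))
        \<le> (3/2 * min x y powr (-3/2)) * norm (complex_of_real x - of_real y)"
  proof (rule field_differentiable_bound[where f' = "\<lambda>w. - z * w powr (-z - 1)"])
    fix w assume "w \<in> ?S"
    then obtain t where t: "w = of_real t" "min x y \<le> t" using real_point by blast
    with assms have "w \<notin> \<real>\<^sub>\<le>\<^sub>0" by (auto simp: complex_nonpos_Reals_iff)
    then show "((\<lambda>w. w powr (-z)) has_field_derivative - z * w powr (-z - 1)) (at w within ?S)"
      using has_field_derivative_at_within has_field_derivative_powr by fastforce
  next
    fix w assume "w \<in> ?S"
    then obtain t where t: "w = of_real t" "min x y \<le> t" using real_point by blast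
    have "norm (w powr (-z - 1)) = t powr (- Re z - 1)"
      using t assms by (simp add: norm_powr_real_powr)
    also have "\<dots> \<le> min x y powr (- Re z - 1)"
      using t assms Re_z by (intro powr_mono2') auto
    also have "\<dots> \<le> min x y powr (-3/2)"
      using assms Re_z by (intro powr_mono) auto
    finally show "norm (- z * w powr (-z - 1)) \<le> 3/2 * min x y powr (-3/2)"
      unfolding norm_mult norm_minus_cancel using norm_z by (intro mult_mono) auto
  qed auto
  moreover have "norm (complex_of_real x - of_real y) = \<bar>x - y\<bar>"
    by (metis norm_of_real of_real_diff)
  ultimately show ?thesis
    by (simp add: algebra_simps)
qed

text \<open>Unlike either zeta function, the difference series converges for Re z > 0 and so is
  holomorphic across z = 1.\<close>

definition hurwitz_zeta_diff :: "real \<Rightarrow> real \<Rightarrow> complex \<Rightarrow> complex" where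
  "hurwitz_zeta_diff a b z =
     (\<Sum>k. of_real (real k + a) powr (-z) - of_real (real k + b) powr (-z))"

lemma hurwitz_zeta_diff_holomorphic:
  assumes "0 \<le> a" "0 \<le> b"
  shows "hurwitz_zeta_diff a b holomorphic_on ball 1 (1/2)"
    and "continuous_on (cball 1 (1/2)) (hurwitz_zeta_diff a b)"
proof -
  define u where "u k z = of_real (real k + a) powr (-z) - of_real (real k + b) powr (-z)"
    for k :: nat and z :: complex
  have lim: "uniform_limit (cball 1 (1/2)) (\<lambda>n z. \<Sum>k<n. u k z) (\<lambda>z. \<Sum>k. u k z)
               sequentially"
  proof (rule Weierstrass_m_test_ev)
    show "\<forall>\<^sub>F k in sequentially. \<forall>z\<in>cball 1 (1/2).
            norm (u k z) \<le> 3/2 * \<bar>a - b\<bar> * real k powr (-3/2)"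
      using eventually_ge_at_top[of "1::nat"]
    proof eventually_elim
      case (elim k)
      show ?case
      proof
        fix z :: complex assume "z \<in> cball 1 (1/2)"
        with elim assms have
          "norm (u k z) \<le> 3/2 * \<bar>a - b\<bar> * min (real k + a) (real k + b) powr (-3/2)"
          unfolding u_def using norm_powr_diff_le[of "real k + a" "real k + b" z] by simp
        also have "\<dots> \<le> 3/2 * \<bar>a - b\<bar> * real k powr (-3/2)"
          using assms elim by (intro mult_left_mono powr_mono2') auto
        finally show "norm (u k z) \<le> 3/2 * \<bar>a - b\<bar> * real k powr (-3/2)" .
      qed
    qed
    show "summable (\<lambda>k. 3/2 * \<bar>a - b\<bar> * real k powr (-3/2))"
      using summable_real_powr_iff[of "-3/2"] by (intro summable_mult) simp
  qed
  have partial_sums: "\<forall>\<^sub>F n in sequentially.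
      continuous_on (cball 1 (1/2)) (\<lambda>z. \<Sum>k<n. u k z) \<and>
      (\<lambda>z. \<Sum>k<n. u k z) holomorphic_on ball 1 (1/2)"
    unfolding u_def by (intro always_eventually allI conjI holomorphic_on_imp_continuous_on holomorphic_intros)
  obtain "continuous_on (cball 1 (1/2)) (\<lambda>z. \<Sum>k. u k z)"
      "(\<lambda>z. \<Sum>k. u k z) holomorphic_on ball 1 (1/2)"
    using holomorphic_uniform_limit[OF partial_sums lim] by auto
  then show "hurwitz_zeta_diff a b holomorphic_on ball 1 (1/2)"
    and "continuous_on (cball 1 (1/2)) (hurwitz_zeta_diff a b)"
    unfolding hurwitz_zeta_diff_def[abs_def] u_def by auto
qed

lemma hurwitz_zeta_diff_of_real_sums:
  assumes "0 < a" "0 < b" "(\<lambda>k. (real k + a) powr (-s) - (real k + b) powr (-s)) sums L"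
  shows "hurwitz_zeta_diff a b (of_real s) = of_real L"
proof -
  have "of_real (real k + c) powr (- of_real s) = complex_of_real ((real k + c) powr (-s))"
    if "0 < c" for c k
    using powr_of_real[of "real k + c" "-s"] that by simp
  with sums_of_real[OF assms(3), where 'a=complex] show ?thesis
    unfolding hurwitz_zeta_diff_def using assms by (simp add: sums_iff)
qed

lemma hurwitz_zeta_diff_of_real:
  assumes "1 < s" "0 < a" "0 < b"
  shows "hurwitz_zeta_diff a b (of_real s) = of_real (hurwitz_zeta_real s a - hurwitz_zeta_real s b)"
  unfolding hurwitz_zeta_real_def using assms
  by (intro hurwitz_zeta_diff_of_real_sums sums_diff summable_sums summable_hurwitz_zeta_real)

lemma norm_hurwitz_zeta_diff_le:
  assumes "1 \<le> a" "1 \<le> b" "z \<in> cball 1 (1/2)"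
  shows "norm (hurwitz_zeta_diff a b z) \<le> 3/2 * hurwitz_zeta_real (3/2) 1 * \<bar>a - b\<bar>"
proof -
  have summable: "summable (\<lambda>k. (real k + 1) powr (-3/2))"
    using summable_hurwitz_zeta_real[of "3/2" 1] by simp
  have "norm (hurwitz_zeta_diff a b z) \<le> (\<Sum>k. 3/2 * \<bar>a - b\<bar> * (real k + 1) powr (-3/2))"
    unfolding hurwitz_zeta_diff_def
  proof (rule norm_suminf_le)
    fix k
    have "norm (of_real (real k + a) powr (-z) - of_real (real k + b) powr (-z))
            \<le> 3/2 * \<bar>a - b\<bar> * min (real k + a) (real k + b) powr (-3/2)"
      using norm_powr_diff_le[of "real k + a" "real k + b" z] assms by simp
    also have "\<dots> \<le> 3/2 * \<bar>a - b\<bar> * (real k + 1) powr (-3/2)"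
      using assms by (intro mult_left_mono powr_mono2') auto
    finally show "norm (of_real (real k + a) powr (-z) - of_real (real k + b) powr (-z))
            \<le> 3/2 * \<bar>a - b\<bar> * (real k + 1) powr (-3/2)" .
  qed (use summable in \<open>intro summable_mult\<close>)
  also have "\<dots> = 3/2 * hurwitz_zeta_real (3/2) 1 * \<bar>a - b\<bar>"
    unfolding hurwitz_zeta_real_def using suminf_mult[OF summable, of "3/2 * \<bar>a - b\<bar>"]
    by (simp add: mult_ac)
  finally show ?thesis .
qed

lemma norm_higher_deriv_hurwitz_zeta_diff_le:
  assumes "1 \<le> a" "1 \<le> b"
  shows "norm ((deriv ^^ n) (hurwitz_zeta_diff a b) 1)
           \<le> fact n * 2 ^ n * (3/2 * hurwitz_zeta_real (3/2) 1 * \<bar>a - b\<bar>)"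
proof -
  have "norm ((deriv ^^ n) (hurwitz_zeta_diff a b) 1)
          \<le> fact n * (3/2 * hurwitz_zeta_real (3/2) 1 * \<bar>a - b\<bar>) / (1/2) ^ n"
    using assms
    by (intro Cauchy_inequality hurwitz_zeta_diff_holomorphic norm_hurwitz_zeta_diff_le)
       (auto simp: dist_norm)
  then show ?thesis
    by (simp add: power_one_over mult_ac)
qed

lemma hurwitz_zeta_diff_half_one_at_1: "hurwitz_zeta_diff (1/2) 1 1 = of_real (2 * ln 2)"
proof -
  have "(real k + 1/2) powr (-1) - (real k + 1) powr (-1)
          = 2 * (inverse (real (2*k+1)) - inverse (real (2*k+2)))" for k
  proof -
    have "(real k + 1/2) powr (-1) = 2 * inverse (real (2*k+1))"
      by (simp add: powr_neg_one field_simps)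
    moreover have "(real k + 1) powr (-1) = 2 * inverse (real (2*k+2))"
      by (simp add: powr_neg_one field_simps)
    ultimately show ?thesis by (simp add: algebra_simps)
  qed
  then have "(\<lambda>k. (real k + 1/2) powr (-1) - (real k + 1) powr (-1)) sums (2 * ln 2)"
    using sums_mult[OF alternating_harmonic_series_sums', of 2] by simp
  from hurwitz_zeta_diff_of_real_sums[of "1/2" 1 1, OF _ _ this] show ?thesis
    by simp
qed

lemma zeta_minus_pole_holomorphic_extension:
  obtains G r where "0 < r" "G holomorphic_on ball 1 r"
    "\<And>s. 1 < s \<Longrightarrow> s < 1 + r \<Longrightarrow>
       G (of_real s) = of_real (hurwitz_zeta_real s 1 - 1 / (s - 1))"
proof -
  \<comment> \<open>By the duplication formula hurwitz_zeta_diff (1/2) 1 s = (s - 1) E(s) zeta(s,1), so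
    zeta(s,1) - 1/(s-1) = Q(s)/E(s); Q is holomorphic because P vanishes at 1.\<close>
  define E where
    "E z = (if z = 1 then deriv (\<lambda>z. 2 powr z) 1 else (2 powr z - 2 powr 1) / (z - 1))"
    for z :: complex
  define P where "P z = hurwitz_zeta_diff (1/2) 1 z - E z" for z
  define Q where "Q z = (if z = 1 then deriv P 1 else (P z - P 1) / (z - 1))" for z
  have two_powr_1: "(2::complex) powr 1 = 2"
    by (simp add: powr_def)
  have E_holomorphic: "E holomorphic_on UNIV"
    unfolding E_def[abs_def] by (rule pole_lemma) (auto intro: holomorphic_intros)
  have "E 1 = Ln 2 * 2 powr 1"
    unfolding E_def using has_field_derivative_powr_right[of 2 1] DERIV_imp_deriv by simp
  then have E_1: "E 1 = of_real (2 * ln 2)"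
    using Ln_of_real[of 2] two_powr_1 by simp
  have E_of_real: "E (of_real s) = of_real ((2 powr s - 2) / (s - 1))" if "s \<noteq> 1" for s
    using that powr_of_real[of 2 s] two_powr_1 by (simp add: E_def)
  have P_holomorphic: "P holomorphic_on ball 1 (1/2)"
    unfolding P_def[abs_def] using hurwitz_zeta_diff_holomorphic(1)[of "1/2" 1] E_holomorphic
    by (auto intro!: holomorphic_intros intro: holomorphic_on_subset)
  have P_1: "P 1 = 0"
    by (simp add: P_def E_1 hurwitz_zeta_diff_half_one_at_1)
  have Q_holomorphic: "Q holomorphic_on ball 1 (1/2)"
    unfolding Q_def[abs_def] by (rule pole_lemma[OF P_holomorphic]) simp
  have "continuous (at 1) E"
    using E_holomorphic holomorphic_on_imp_continuous_on continuous_on_eq_continuous_at by blast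
  then obtain e where "e > 0" and E_nonzero: "\<And>z. dist 1 z < e \<Longrightarrow> E z \<noteq> 0"
    using continuous_at_avoid[of 1 E 0] E_1 by auto
  define r where "r = min e (1/2)"
  show thesis
  proof
    show "0 < r" using \<open>e > 0\<close> by (simp add: r_def)
    show "(\<lambda>z. Q z / E z) holomorphic_on ball 1 r"
      using Q_holomorphic E_holomorphic E_nonzero
      by (intro holomorphic_on_divide) (auto simp: r_def intro: holomorphic_on_subset)
  next
    fix s assume s: "1 < s" "s < 1 + r"
    define c where "c = complex_of_real (hurwitz_zeta_real s 1)"
    define x where "x = complex_of_real s"
    have "dist 1 x = s - 1"
      using dist_of_real[of 1 s, where 'a=complex] s by (simp add: x_def dist_real_def)
    then have "x \<noteq> 1" "E x \<noteq> 0"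
      using s E_nonzero[of x] by (auto simp: r_def)
    have "hurwitz_zeta_diff (1/2) 1 x = of_real ((2 powr s - 2) * hurwitz_zeta_real s 1)"
      using s hurwitz_zeta_diff_of_real[of s "1/2" 1] hurwitz_zeta_real_half[of s]
      by (simp add: x_def algebra_simps)
    also have "\<dots> = (x - 1) * E x * c"
      using E_of_real[of s] s by (simp add: x_def c_def)
    finally have "Q x = ((x - 1) * E x * c - E x) / (x - 1)"
      using \<open>x \<noteq> 1\<close> unfolding Q_def P_1 by (simp add: P_def)
    then have "Q x / E x = c - 1 / (x - 1)"
      using \<open>x \<noteq> 1\<close> \<open>E x \<noteq> 0\<close> by (simp add: field_simps)
    then show "Q (of_real s) / E (of_real s) = of_real (hurwitz_zeta_real s 1 - 1 / (s - 1))"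
      by (simp add: x_def c_def)
  qed
qed

lemma higher_deriv_complex_of_real:
  assumes "F holomorphic_on S" "open S" "open I" "of_real ` I \<subseteq> S"
    and "\<And>y. y \<in> I \<Longrightarrow> F (of_real y) = of_real (f y)"
  shows "x \<in> I \<Longrightarrow> (deriv ^^ n) f x = Re ((deriv ^^ n) F (of_real x))"
proof (induction n arbitrary: x)
  case 0
  then show ?case using assms(5) by simp
next
  case (Suc n)
  define K where "K = (deriv ^^ n) F"
  have "K holomorphic_on S"
    unfolding K_def using assms(1,2) by (rule holomorphic_higher_deriv)
  then have "(K has_field_derivative deriv K (of_real x)) (at (of_real x))"
    using Suc.prems assms(2,4) by (intro holomorphic_derivI) auto
  then have K_deriv: "((\<lambda>y. Re (K (of_real y))) has_field_derivative Re (deriv K (of_real x))) (at x)"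
    by (intro has_field_derivative_Re has_vector_derivative_real_field)
  have "\<forall>\<^sub>F y in nhds x. (deriv ^^ n) f y = Re (K (of_real y))"
    using eventually_nhds_in_open[OF assms(3) Suc.prems]
    by eventually_elim (simp add: Suc.IH K_def)
  then have "deriv ((deriv ^^ n) f) x = deriv (\<lambda>y. Re (K (of_real y))) x"
    by (rule deriv_cong_ev) simp
  also have "\<dots> = Re (deriv K (of_real x))"
    using K_deriv by (rule DERIV_imp_deriv)
  finally show ?case
    by (simp add: K_def)
qed

lemma stieltjes_eq_higher_deriv:
  fixes F :: "complex \<Rightarrow> complex"
  assumes "0 < r" "F holomorphic_on ball 1 r"
    and "\<And>s. 1 < s \<Longrightarrow> s < 1 + r \<Longrightarrow>
           F (of_real s) = of_real (hurwitz_zeta_real s a - 1 / (s - 1))"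
  shows "stieltjes n a = (-1) ^ n * Re ((deriv ^^ n) F 1)"
proof -
  define f where "f s = hurwitz_zeta_real s a - 1 / (s - 1)" for s
  define K where "K = (deriv ^^ n) F"
  have "of_real ` {1<..<1 + r} \<subseteq> ball (1::complex) r"
    using dist_of_real[of 1 _, where 'a=complex] by (auto simp: dist_real_def)
  then have f_eq: "(deriv ^^ n) f s = Re (K (of_real s))" if "s \<in> {1<..<1 + r}" for s
    unfolding K_def using assms that
    by (intro higher_deriv_complex_of_real[where S = "ball 1 r" and I = "{1<..<1 + r}"])
       (auto simp: f_def)
  have "K holomorphic_on ball 1 r"
    unfolding K_def using assms(2) by (rule holomorphic_higher_deriv) simp
  then have "isCont K 1"
    using assms(1) by (metis centre_in_ball continuous_on_eq_continuous_at open_ball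
        holomorphic_on_imp_continuous_on)
  then have "isCont (\<lambda>s. K (complex_of_real s)) 1"
    using isCont_o2[where f = complex_of_real and a = 1 and g = K] by simp
  then have "isCont (\<lambda>s. Re (K (complex_of_real s))) 1"
    by (rule continuous_Re)
  then have "((\<lambda>s. Re (K (of_real s))) \<longlongrightarrow> Re (K 1)) (at_right 1)"
    by (simp add: isCont_def filterlim_at_split)
  moreover have "\<forall>\<^sub>F s in at_right 1. s \<in> {1<..<1 + r}"
    using assms(1) by (intro eventually_at_right_real) simp
  then have "\<forall>\<^sub>F s in at_right 1. Re (K (of_real s)) = (deriv ^^ n) f s"
    by eventually_elim (simp add: f_eq)
  ultimately have "((deriv ^^ n) f \<longlongrightarrow> Re (K 1)) (at_right 1)"
    by (rule Lim_transform_eventually)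
  then show ?thesis
    unfolding stieltjes_def f_def[symmetric] K_def by (simp add: tendsto_Lim)
qed

lemma stieltjes_diff_eq_higher_deriv:
  fixes H :: "complex \<Rightarrow> complex"
  assumes "0 < \<rho>" "H holomorphic_on ball 1 \<rho>"
    and "\<And>s. 1 < s \<Longrightarrow> s < 1 + \<rho> \<Longrightarrow>
           H (of_real s) = of_real (hurwitz_zeta_real s a - hurwitz_zeta_real s 1)"
  shows "stieltjes n a = stieltjes n 1 + (-1) ^ n * Re ((deriv ^^ n) H 1)"
proof -
  obtain G r where "0 < r" and G_holomorphic: "G holomorphic_on ball 1 r"
    and G_eq: "\<And>s. 1 < s \<Longrightarrow> s < 1 + r \<Longrightarrow>
                 G (of_real s) = of_real (hurwitz_zeta_real s 1 - 1 / (s - 1))"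
    using zeta_minus_pole_holomorphic_extension by blast
  define r' where "r' = min r \<rho>"
  have "0 < r'" using \<open>0 < r\<close> assms(1) by (simp add: r'_def)
  have G_holomorphic': "G holomorphic_on ball 1 r'"
    and H_holomorphic': "H holomorphic_on ball 1 r'"
    using G_holomorphic assms(2) by (auto simp: r'_def intro: holomorphic_on_subset)
  have "stieltjes n 1 = (-1) ^ n * Re ((deriv ^^ n) G 1)"
    using \<open>0 < r'\<close> G_holomorphic' G_eq
    by (intro stieltjes_eq_higher_deriv[where r = r']) (auto simp: r'_def)
  moreover have "stieltjes n a = (-1) ^ n * Re ((deriv ^^ n) (\<lambda>z. G z + H z) 1)"
    using \<open>0 < r'\<close> G_holomorphic' H_holomorphic' G_eq assms(3)
    by (intro stieltjes_eq_higher_deriv[where r = r'])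
       (auto simp: r'_def intro!: holomorphic_intros)
  moreover have "(deriv ^^ n) (\<lambda>z. G z + H z) 1 = (deriv ^^ n) G 1 + (deriv ^^ n) H 1"
    using \<open>0 < r'\<close> G_holomorphic' H_holomorphic' by (intro higher_deriv_add) auto
  ultimately show ?thesis
    by (simp add: algebra_simps)
qed

lemma higher_deriv_powr_right:
  fixes w :: complex
  assumes "w \<noteq> 0"
  shows "(deriv ^^ n) (\<lambda>z. w powr z) = (\<lambda>z. Ln w ^ n * w powr z)"
proof (induction n)
  case (Suc n)
  have "deriv (\<lambda>z. Ln w ^ n * w powr z) z = Ln w ^ Suc n * w powr z" for z
    using assms by (intro DERIV_imp_deriv derivative_eq_intros) (auto simp: mult_ac)
  with Suc.IH show ?case
    by auto
qed simp

lemma stieltjes_shift: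
  assumes "0 < a"
  shows "stieltjes n a = ln a ^ n / a + stieltjes n (a + 1)"
proof -
  define D where "D = hurwitz_zeta_diff (a + 1) 1"
  define w where "w = complex_of_real (1 / a)"
  have D_holomorphic: "D holomorphic_on ball 1 (1/2)"
    unfolding D_def using assms by (intro hurwitz_zeta_diff_holomorphic) auto
  have D_of_real: "D (of_real s) = of_real (hurwitz_zeta_real s (a + 1) - hurwitz_zeta_real s 1)"
    if "1 < s" for s
    unfolding D_def using assms that by (intro hurwitz_zeta_diff_of_real) auto
  have "w powr (of_real s) = of_real (a powr (-s))" for s
    using assms powr_of_real[of "1/a" s] by (simp add: w_def powr_minus_divide powr_divide)
  then have "stieltjes n a
               = stieltjes n 1 + (-1) ^ n * Re ((deriv ^^ n) (\<lambda>z. w powr z + D z) 1)"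
    using D_holomorphic D_of_real hurwitz_zeta_real_shift[OF _ assms]
    by (intro stieltjes_diff_eq_higher_deriv[where \<rho> = "1/2"]) (auto intro!: holomorphic_intros)
  also have "(deriv ^^ n) (\<lambda>z. w powr z + D z) 1
               = (deriv ^^ n) (\<lambda>z. w powr z) 1 + (deriv ^^ n) D 1"
    using D_holomorphic
    by (intro higher_deriv_add[where S = "ball 1 (1/2)"]) (auto intro: holomorphic_intros)
  also have "(deriv ^^ n) (\<lambda>z. w powr z) 1 = of_real ((- ln a) ^ n / a)"
    using assms Ln_of_real[of "1/a"] by (simp add: higher_deriv_powr_right w_def ln_div)
  also have "stieltjes n 1 + (-1) ^ n * Re (of_real ((- ln a) ^ n / a) + (deriv ^^ n) D 1)
               = ln a ^ n / a + (stieltjes n 1 + (-1) ^ n * Re ((deriv ^^ n) D 1))"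
    by (simp add: algebra_simps power_minus')
  also have "stieltjes n 1 + (-1) ^ n * Re ((deriv ^^ n) D 1) = stieltjes n (a + 1)"
    using D_holomorphic D_of_real by (intro stieltjes_diff_eq_higher_deriv[symmetric]) auto
  finally show ?thesis .
qed

lemma tendsto_stieltjes_at_right_1: "(stieltjes n \<longlongrightarrow> stieltjes n 1) (at_right 1)"
proof -
  define C where "C = fact n * 2 ^ n * (3/2 * hurwitz_zeta_real (3/2) 1)"
  have "\<forall>\<^sub>F a in at_right 1. norm (stieltjes n a - stieltjes n 1) \<le> C * (a - 1)"
    using eventually_at_right_less[of 1]
  proof eventually_elim
    case (elim a)
    have "stieltjes n a - stieltjes n 1 = (-1) ^ n * Re ((deriv ^^ n) (hurwitz_zeta_diff a 1) 1)"
      using elim hurwitz_zeta_diff_holomorphic(1)[of a 1] hurwitz_zeta_diff_of_real[of _ a 1]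
      by (subst stieltjes_diff_eq_higher_deriv[where \<rho> = "1/2"]) auto
    then have "norm (stieltjes n a - stieltjes n 1)
                 \<le> norm ((deriv ^^ n) (hurwitz_zeta_diff a 1) 1)"
      by (simp add: abs_mult abs_Re_le_cmod)
    also have "\<dots> \<le> C * (a - 1)"
      using norm_higher_deriv_hurwitz_zeta_diff_le[of a 1 n] elim by (simp add: C_def mult_ac)
    finally show ?case .
  qed
  moreover have "((\<lambda>a. C * (a - 1)) \<longlongrightarrow> 0) (at_right 1)"
    by (intro tendsto_eq_intros) auto
  ultimately have "((\<lambda>a. stieltjes n a - stieltjes n 1) \<longlongrightarrow> 0) (at_right 1)"
    by (rule Lim_null_comparison)
  then show ?thesis
    by (rule LIM_zero_cancel)
qed

lemma tendsto_stieltjes_inverse_nat: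
  "((\<lambda>m::nat. stieltjes n (1 / real m) - real m * (- ln (real m)) ^ n)
      \<longlongrightarrow> stieltjes n 1) sequentially"
proof -
  have "filterlim (\<lambda>m::nat. 1 / real m + 1) (at_right 1) sequentially"
    unfolding filterlim_at using eventually_gt_at_top[of 0]
    by (auto intro!: tendsto_eq_intros lim_1_over_n elim: eventually_mono)
  with tendsto_stieltjes_at_right_1
  have "((\<lambda>m::nat. stieltjes n (1 / real m + 1)) \<longlongrightarrow> stieltjes n 1) sequentially"
    by (rule filterlim_compose)
  moreover have "\<forall>\<^sub>F m in sequentially.
      stieltjes n (1 / real m + 1) = stieltjes n (1 / real m) - real m * (- ln (real m)) ^ n"
    using eventually_gt_at_top[of 0]
  proof eventually_elim
    case (elim m)
    then show ?case
      using stieltjes_shift[of "1 / real m" n] by (simp add: ln_div)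
  qed
  ultimately show ?thesis
    by (rule Lim_transform_eventually)
qed

theorem corollary3:
  shows "((\<lambda>m::nat. stieltjes 1 (1 / real m) + real m * ln (real m))
            \<longlongrightarrow> stieltjes 1 1) sequentially
       \<and> ((\<lambda>m::nat. stieltjes 2 (1 / real m) - real m * (ln (real m))^2)
            \<longlongrightarrow> stieltjes 2 1) sequentially"
  using tendsto_stieltjes_inverse_nat[of 1] tendsto_stieltjes_inverse_nat[of 2] by simp

end
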